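(* In the setting of the Cauchy problem below, the generating function $\mathcal D(z,w)=\sum_{(x,y)\in\mathbb Z_+^2} r(x,y)z^{-x-1}w^{-y-1}$ of the solution is (the expansion of) a rational function of $(z,w)$ if and only if the generating function of the initial data $$\Phi(z,w)=\sum_{(x,y)\in X}\varphi(x,y)z^{-x-1}w^{-y-1}$$ is (the expansion of) a rational function. Here: $P(z)=\sum_{\alpha=0}^{m} c_{\alpha,1}z^\alpha$, $Q(z)=\sum_{\alpha=0}^{m} c_{\alpha,0}z^\alpha$ are complex polynomials with $c_{m,1}\ne0$, $m\ge1$, $\deg Q<m$; $X=\{(x,y)\in\mathbb Z_+^2: x<m\text{ or }y=0\}$; $\varphi:X\to\mathbb C$ is arbitrary; and $r$ is the solution of $\sum_{\alpha=0}^{m} c_{\alpha,1} r(x+\alpha,y+1)-\sum_{\alpha=0}^{m} c_{\alpha,0} r(x+\alpha,y)=0$ for all $x,y\ge0$ with $r|_X=\varphi$.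
   Context: $\mathbb Z_+$ denotes the nonnegative integers. A formal Laurent series in $z^{-1},w^{-1}$ is called rational if it is the expansion (in the region where $|z|,|w|$ are large) of a rational function. *)

theory Defs
  imports "HOL-Computational_Algebra.Polynomial"
begin

text \<open>A formal series  F = sum over (x,y) in Z_+^2 of a(x,y) z^(-x-1) w^(-y-1)
  is represented by its coefficient function a.  A polynomial in z,w is
  represented as a polynomial in w whose coefficients are polynomials in z:
  coeff (coeff q b) a is the coefficient of z^a w^b.\<close>

text \<open>Coefficient of z^i w^j (i, j integers) in the product q * F (finite sum).\<close>
definition prod_coeff :: "complex poly poly \<Rightarrow> (nat \<Rightarrow> nat \<Rightarrow> complex) \<Rightarrow> int \<Rightarrow> int \<Rightarrow> complex" where
  "prod_coeff q a i j =
     (\<Sum>\<beta>\<le>degree q. \<Sum>\<alpha>\<le>degree (coeff q \<beta>).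
        if int \<alpha> - i - 1 \<ge> 0 \<and> int \<beta> - j - 1 \<ge> 0
        then coeff (coeff q \<beta>) \<alpha> * a (nat (int \<alpha> - i - 1)) (nat (int \<beta> - j - 1))
        else 0)"

text \<open>F is rational: there is a nonzero polynomial q(z,w) such that q * F is a
  polynomial p(z,w), i.e. F is the expansion of p/q.\<close>
definition rational_series :: "(nat \<Rightarrow> nat \<Rightarrow> complex) \<Rightarrow> bool" where
  "rational_series a \<longleftrightarrow>
     (\<exists>q. q \<noteq> 0 \<and> (\<forall>i j. (i < 0 \<or> j < 0) \<longrightarrow> prod_coeff q a i j = 0))"

end

theory Submission
  imports Defs
begin

text \<open>Shift the exponents so that a series becomes an array of coefficients indexed by
  \<open>\<int>\<^sup>2\<close>; multiplication by a polynomial is then a linear action on such arrays, and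
  rationality means that some nonzero polynomial multiplies the array into one supported in
  the closed positive quadrant. Rationality survives linear combinations and multiplication by
  polynomials, and can be cancelled against a nonzero polynomial factor. The key technical fact
  is that cutting a rational array, whose support is bounded above, to finitely many of its top
  rows or columns keeps it rational: the leading \<open>w\<close>-coefficient (resp. the top \<open>z\<close>-monomials)
  of the denominator isolate the top row (resp. column).

  Let \<open>L = P(z) w - Q(z)\<close>. The recurrence says that \<open>L \<cdot> \<D>\<close> vanishes in the negative quadrant,
  while outside it, as \<open>deg P, deg Q \<le> m\<close>, it only sees the values of \<open>r\<close> on \<open>X\<close>, so it agrees
  with \<open>L \<cdot> \<Phi>\<close>. Thus \<open>\<Phi>\<close> is a cut of \<open>\<D>\<close> to its top row and \<open>m\<close> top columns, and \<open>L \<cdot> \<D>\<close> is a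
  cut of \<open>L \<cdot> \<Phi>\<close> to one top row and \<open>m\<close> top columns; both directions follow.\<close>

text \<open>\<open>b i j\<close> is the coefficient of \<open>z\<^sup>i w\<^sup>j\<close>.\<close>

type_synonym lseries = "int \<Rightarrow> int \<Rightarrow> complex"

definition lmult_z :: "complex poly \<Rightarrow> lseries \<Rightarrow> lseries" where
  "lmult_z c b i j = (\<Sum>\<alpha>\<le>degree c. coeff c \<alpha> * b (i - int \<alpha>) j)"

definition lmult :: "complex poly poly \<Rightarrow> lseries \<Rightarrow> lseries" where
  "lmult q b i j = (\<Sum>\<beta>\<le>degree q. lmult_z (coeff q \<beta>) b i (j - int \<beta>))"

definition lrational :: "lseries \<Rightarrow> bool" where
  "lrational b \<longleftrightarrow> (\<exists>q. q \<noteq> 0 \<and> (\<forall>i j. (i < 0 \<or> j < 0) \<longrightarrow> lmult q b i j = 0))"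

definition lseries_of :: "(nat \<Rightarrow> nat \<Rightarrow> complex) \<Rightarrow> lseries" where
  "lseries_of a i j = (if i < 0 \<and> j < 0 then a (nat (- i - 1)) (nat (- j - 1)) else 0)"

lemma rational_series_iff_lrational: "rational_series a \<longleftrightarrow> lrational (lseries_of a)"
proof -
  have "prod_coeff q a i j = lmult q (lseries_of a) i j" for q i j
    unfolding prod_coeff_def lmult_def lmult_z_def lseries_of_def
    by (intro sum.cong refl) (auto simp: algebra_simps)
  then show ?thesis unfolding rational_series_def lrational_def by simp
qed

subsection \<open>The action of polynomials on coefficient arrays\<close>

lemma lmult_z_eq_sum_lessThan:
  "degree c < K \<Longrightarrow> lmult_z c b i j = (\<Sum>\<alpha><K. coeff c \<alpha> * b (i - int \<alpha>) j)"
  unfolding lmult_z_def by (rule sum.mono_neutral_cong_left) (auto simp: coeff_eq_0)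

lemma lmult_eq_sum_lessThan:
  "degree q < K \<Longrightarrow> lmult q b i j = (\<Sum>\<beta><K. lmult_z (coeff q \<beta>) b i (j - int \<beta>))"
  unfolding lmult_def by (rule sum.mono_neutral_cong_left) (auto simp: coeff_eq_0 lmult_z_def)

lemma lmult_z_0 [simp]: "lmult_z 0 b i j = 0"
  by (simp add: lmult_z_def)

lemma lmult_0 [simp]: "lmult 0 b i j = 0"
  by (simp add: lmult_def)

lemma lmult_z_pCons: "lmult_z (pCons a c) b i j = a * b i j + lmult_z c b (i - 1) j"
proof -
  have "lmult_z (pCons a c) b i j
      = (\<Sum>\<alpha><Suc (Suc (degree c)). coeff (pCons a c) \<alpha> * b (i - int \<alpha>) j)"
    by (rule lmult_z_eq_sum_lessThan) (metis degree_pCons_le le_imp_less_Suc)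
  also have "\<dots> = a * b i j + (\<Sum>\<alpha><Suc (degree c). coeff c \<alpha> * b (i - 1 - int \<alpha>) j)"
    by (subst sum.lessThan_Suc_shift) (simp add: algebra_simps)
  also have "\<dots> = a * b i j + lmult_z c b (i - 1) j"
    by (simp add: lmult_z_eq_sum_lessThan[of c "Suc (degree c)"])
  finally show ?thesis .
qed

lemma lmult_pCons: "lmult (pCons a c) b i j = lmult_z a b i j + lmult c b i (j - 1)"
proof -
  have "lmult (pCons a c) b i j
      = (\<Sum>\<beta><Suc (Suc (degree c)). lmult_z (coeff (pCons a c) \<beta>) b i (j - int \<beta>))"
    by (rule lmult_eq_sum_lessThan) (metis degree_pCons_le le_imp_less_Suc)
  also have "\<dots> = lmult_z a b i j + (\<Sum>\<beta><Suc (degree c). lmult_z (coeff c \<beta>) b i (j - 1 - int \<beta>))"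
    by (subst sum.lessThan_Suc_shift) (simp add: algebra_simps)
  also have "\<dots> = lmult_z a b i j + lmult c b i (j - 1)"
    by (simp add: lmult_eq_sum_lessThan[of c "Suc (degree c)"])
  finally show ?thesis .
qed

lemma lmult_z_add: "lmult_z (c + d) b i j = lmult_z c b i j + lmult_z d b i j"
proof -
  define K where "K = Suc (max (degree c) (degree d))"
  have "degree (c + d) < K" using degree_add_le_max[of c d] unfolding K_def by linarith
  then show ?thesis
    by (simp add: lmult_z_eq_sum_lessThan[of _ K] K_def sum.distrib distrib_right)
qed

lemma lmult_add: "lmult (q + p) b i j = lmult q b i j + lmult p b i j"
proof -
  define K where "K = Suc (max (degree q) (degree p))"
  have "degree (q + p) < K" using degree_add_le_max[of q p] unfolding K_def by linarith
  then show ?thesis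
    by (simp add: lmult_eq_sum_lessThan[of _ K] K_def sum.distrib lmult_z_add)
qed

lemma lmult_z_uminus: "lmult_z (- c) b i j = - lmult_z c b i j"
  by (simp add: lmult_z_def sum_negf)

lemma lmult_z_smult: "lmult_z (smult a c) b i j = a * lmult_z c b i j"
proof -
  have "degree (smult a c) < Suc (degree c)" using degree_smult_le[of a c] by linarith
  then show ?thesis
    by (simp only: lmult_z_eq_sum_lessThan[of _ "Suc (degree c)"] coeff_smult sum_distrib_left
        mult.assoc lessI)
qed

lemma lmult_z_lincomb:
  "lmult_z c (\<lambda>u v. x * f u v + y * g u v) i j = x * lmult_z c f i j + y * lmult_z c g i j"
  by (simp add: lmult_z_def sum.distrib sum_distrib_left algebra_simps)

lemma lmult_lincomb:
  "lmult q (\<lambda>u v. x * f u v + y * g u v) i j = x * lmult q f i j + y * lmult q g i j"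
  by (simp add: lmult_def lmult_z_lincomb sum.distrib sum_distrib_left)

lemma lmult_z_mult: "lmult_z (c * d) b = lmult_z c (lmult_z d b)"
proof (induction c rule: pCons_induct)
  case (pCons a c)
  show ?case
    by (auto simp: fun_eq_iff lmult_z_add lmult_z_smult lmult_z_pCons pCons.IH)
qed (auto simp: fun_eq_iff lmult_z_def)

lemma lmult_smult: "lmult (smult c p) b = lmult_z c (lmult p b)"
proof (induction p rule: pCons_induct)
  case (pCons d p)
  have shift: "lmult_z c (\<lambda>u v. f u v + g u (v - 1)) i j = lmult_z c f i j + lmult_z c g i (j - 1)"
    for f g :: lseries and i j
    by (simp add: lmult_z_def sum.distrib distrib_left)
  show ?case
    by (auto simp: fun_eq_iff lmult_pCons lmult_z_mult pCons.IH shift)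
qed (auto simp: fun_eq_iff lmult_z_def)

lemma lmult_mult: "lmult (q * p) b = lmult q (lmult p b)"
proof (induction q rule: pCons_induct)
  case (pCons c q)
  show ?case
    by (auto simp: fun_eq_iff lmult_add lmult_smult lmult_pCons pCons.IH)
qed (auto simp: fun_eq_iff)

lemma lmult_z_monom: "lmult_z (monom a e) b i j = a * b (i - int e) j"
proof -
  have "lmult_z (monom a e) b i j = (\<Sum>\<alpha><Suc e. coeff (monom a e) \<alpha> * b (i - int \<alpha>) j)"
    by (rule lmult_z_eq_sum_lessThan) (meson degree_monom_le le_imp_less_Suc)
  also have "\<dots> = (\<Sum>\<alpha><Suc e. if \<alpha> = e then a * b (i - int e) j else 0)"
    by (intro sum.cong refl) auto
  finally show ?thesis by simp
qed

lemma lmult_monom: "lmult (monom c e) b i j = lmult_z c b i (j - int e)"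
proof -
  have "lmult (monom c e) b i j = (\<Sum>\<beta><Suc e. lmult_z (coeff (monom c e) \<beta>) b i (j - int \<beta>))"
    by (rule lmult_eq_sum_lessThan) (meson degree_monom_le le_imp_less_Suc)
  also have "\<dots> = (\<Sum>\<beta><Suc e. if \<beta> = e then lmult_z c b i (j - int e) else 0)"
    by (intro sum.cong refl) auto
  finally show ?thesis by simp
qed

lemma lmult_eq_0_outside_quadrant:
  assumes "\<forall>i j. (i < 0 \<or> j < 0) \<longrightarrow> b i j = 0" "i < 0 \<or> j < 0"
  shows "lmult q b i j = 0"
  using assms unfolding lmult_def lmult_z_def by (auto intro!: sum.neutral)

subsection \<open>Closure properties of rationality\<close>

lemma lrational_zero: "lrational (\<lambda>_ _. 0)"
  unfolding lrational_def by (rule exI[of _ 1]) (simp add: lmult_def lmult_z_def)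

lemma lrational_lincomb:
  assumes "lrational b" "lrational c"
  shows "lrational (\<lambda>i j. x * b i j + y * c i j)"
proof -
  obtain q where q: "q \<noteq> 0" "\<forall>i j. (i < 0 \<or> j < 0) \<longrightarrow> lmult q b i j = 0"
    using assms(1) lrational_def by auto
  obtain p where p: "p \<noteq> 0" "\<forall>i j. (i < 0 \<or> j < 0) \<longrightarrow> lmult p c i j = 0"
    using assms(2) lrational_def by auto
  have "lmult (q * p) b = lmult p (lmult q b)"
    by (simp add: mult.commute[of q p] lmult_mult)
  then have "lmult (q * p) (\<lambda>i j. x * b i j + y * c i j) i j
      = x * lmult p (lmult q b) i j + y * lmult q (lmult p c) i j" for i j
    by (simp only: lmult_lincomb) (simp add: lmult_mult)
  then show ?thesis
    unfolding lrational_def using p q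
    by (intro exI[of _ "q * p"]) (auto simp: lmult_eq_0_outside_quadrant)
qed

lemma lrational_lmult:
  assumes "lrational b"
  shows "lrational (lmult p b)"
proof -
  obtain q where q: "q \<noteq> 0" "\<forall>i j. (i < 0 \<or> j < 0) \<longrightarrow> lmult q b i j = 0"
    using assms lrational_def by auto
  have "lmult q (lmult p b) = lmult p (lmult q b)"
    by (metis mult.commute lmult_mult)
  then have "\<forall>i j. (i < 0 \<or> j < 0) \<longrightarrow> lmult q (lmult p b) i j = 0"
    using q(2) by (auto intro: lmult_eq_0_outside_quadrant)
  then show ?thesis
    unfolding lrational_def using q(1) by blast
qed

lemma lrational_lmult_cancel:
  assumes "p \<noteq> 0" "lrational (lmult p b)"
  shows "lrational b"
proof -
  obtain q where "q \<noteq> 0" "\<forall>i j. (i < 0 \<or> j < 0) \<longrightarrow> lmult q (lmult p b) i j = 0"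
    using assms(2) lrational_def by auto
  then show ?thesis
    unfolding lrational_def using assms(1) by (intro exI[of _ "q * p"]) (auto simp: lmult_mult)
qed

subsection \<open>Cutting rational arrays to their top rows and columns\<close>

lemma lrational_top_row:
  assumes "lrational b" "\<forall>i j. j > M \<longrightarrow> b i j = 0"
  shows "lrational (\<lambda>i j. if j = M then b i j else 0)"
proof -
  obtain q where q: "q \<noteq> 0" "\<forall>i j. (i < 0 \<or> j < 0) \<longrightarrow> lmult q b i j = 0"
    using assms(1) lrational_def by auto
  define d where "d = degree q"
  have row: "lmult q b i (M + int d) = lmult_z (lead_coeff q) b i M" for i
  proof -
    have "lmult q b i (M + int d) = (\<Sum>\<beta><Suc d. lmult_z (coeff q \<beta>) b i (M + int d - int \<beta>))"
      by (rule lmult_eq_sum_lessThan) (simp add: d_def)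
    also have "\<dots> = (\<Sum>\<beta><d. lmult_z (coeff q \<beta>) b i (M + int d - int \<beta>))
        + lmult_z (lead_coeff q) b i M"
      by (simp add: d_def)
    also have "(\<Sum>\<beta><d. lmult_z (coeff q \<beta>) b i (M + int d - int \<beta>)) = 0"
      using assms(2) by (intro sum.neutral) (auto simp: lmult_z_def intro!: sum.neutral)
    finally show ?thesis by simp
  qed
  have "lmult (monom (lead_coeff q) d) (\<lambda>i j. if j = M then b i j else 0) i j
      = (if j = M + int d then lmult q b i j else 0)" for i j
    by (auto simp: lmult_monom row lmult_z_def)
  then show ?thesis
    unfolding lrational_def using q by (intro exI[of _ "monom (lead_coeff q) d"]) auto
qed

lemma poly_poly_max_inner_degree:
  fixes q :: "'a::zero poly poly"
  assumes "q \<noteq> 0"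
  obtains e \<beta>\<^sub>0 where "\<And>\<beta>. degree (coeff q \<beta>) \<le> e" "coeff (coeff q \<beta>\<^sub>0) e \<noteq> 0"
proof -
  define S where "S = {\<beta>. coeff q \<beta> \<noteq> 0}"
  have "S \<subseteq> {..degree q}"
    unfolding S_def using le_degree by auto
  then have "finite S"
    by (rule finite_subset) simp
  have "degree q \<in> S"
    unfolding S_def using assms by simp
  define e where "e = Max ((\<lambda>\<beta>. degree (coeff q \<beta>)) ` S)"
  have "e \<in> (\<lambda>\<beta>. degree (coeff q \<beta>)) ` S"
    unfolding e_def using \<open>finite S\<close> \<open>degree q \<in> S\<close> by (intro Max_in) auto
  then obtain \<beta>\<^sub>0 where "coeff q \<beta>\<^sub>0 \<noteq> 0" "degree (coeff q \<beta>\<^sub>0) = e"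
    unfolding S_def by blast
  then have "coeff (coeff q \<beta>\<^sub>0) e \<noteq> 0"
    by (metis leading_coeff_0_iff)
  moreover have "degree (coeff q \<beta>) \<le> e" for \<beta>
  proof (cases "\<beta> \<in> S")
    case True
    then show ?thesis
      unfolding e_def using \<open>finite S\<close> by simp
  next
    case False
    then show ?thesis
      by (simp add: S_def)
  qed
  ultimately show ?thesis
    using that by blast
qed

lemma lrational_top_col:
  assumes "lrational b" "\<forall>i j. i > N \<longrightarrow> b i j = 0"
  shows "lrational (\<lambda>i j. if i = N then b i j else 0)"
proof -
  obtain q where q: "q \<noteq> 0" "\<forall>i j. (i < 0 \<or> j < 0) \<longrightarrow> lmult q b i j = 0"
    using assms(1) lrational_def by auto
  obtain e \<beta>\<^sub>0 where deg_le: "\<And>\<beta>. degree (coeff q \<beta>) \<le> e"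
    and top: "coeff (coeff q \<beta>\<^sub>0) e \<noteq> 0"
    using poly_poly_max_inner_degree[OF q(1)] by blast
  \<comment> \<open>keep only the monomials of \<open>z\<close>-degree \<open>e\<close> of the denominator\<close>
  define q' where "q' = map_poly (\<lambda>c. monom (coeff c e) e) q"
  have coeff_q': "coeff q' \<beta> = monom (coeff (coeff q \<beta>) e) e" for \<beta>
    unfolding q'_def by (simp add: coeff_map_poly)
  have "q' \<noteq> 0"
    using top coeff_q'[of \<beta>\<^sub>0] by auto
  have deg_q': "degree q' < Suc (degree q)"
    unfolding q'_def using map_poly_degree_leq le_imp_less_Suc by blast
  have col: "lmult_z (coeff q \<beta>) b (N + int e) j = coeff (coeff q \<beta>) e * b N j" for \<beta> j
  proof -
    have "lmult_z (coeff q \<beta>) b (N + int e) j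
        = (\<Sum>\<alpha><Suc e. coeff (coeff q \<beta>) \<alpha> * b (N + int e - int \<alpha>) j)"
      by (rule lmult_z_eq_sum_lessThan) (simp add: deg_le le_imp_less_Suc)
    also have "\<dots> = (\<Sum>\<alpha><e. coeff (coeff q \<beta>) \<alpha> * b (N + int e - int \<alpha>) j)
        + coeff (coeff q \<beta>) e * b N j"
      by simp
    also have "(\<Sum>\<alpha><e. coeff (coeff q \<beta>) \<alpha> * b (N + int e - int \<alpha>) j) = 0"
      using assms(2) by (intro sum.neutral) auto
    finally show ?thesis by simp
  qed
  have "lmult q' (\<lambda>i j. if i = N then b i j else 0) i j
      = (if i = N + int e then lmult q b i j else 0)" for i j
  proof -
    have "lmult q' (\<lambda>i j. if i = N then b i j else 0) i j
        = (\<Sum>\<beta><Suc (degree q).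
             lmult_z (coeff q' \<beta>) (\<lambda>i j. if i = N then b i j else 0) i (j - int \<beta>))"
      by (rule lmult_eq_sum_lessThan[OF deg_q'])
    also have "\<dots> = (\<Sum>\<beta><Suc (degree q).
        if i = N + int e then coeff (coeff q \<beta>) e * b N (j - int \<beta>) else 0)"
      by (intro sum.cong refl) (auto simp: coeff_q' lmult_z_monom)
    also have "\<dots> = (if i = N + int e then lmult q b i j else 0)"
      by (auto simp: lmult_eq_sum_lessThan[of q "Suc (degree q)"] col)
    finally show ?thesis .
  qed
  then show ?thesis
    unfolding lrational_def using \<open>q' \<noteq> 0\<close> q(2) by (intro exI[of _ q']) auto
qed

lemma lrational_strip:
  fixes lev :: "int \<Rightarrow> int \<Rightarrow> int"
  assumes top_slice: "\<And>c M. lrational c \<Longrightarrow> \<forall>i j. lev i j > M \<longrightarrow> c i j = 0 \<Longrightarrow>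
      lrational (\<lambda>i j. if lev i j = M then c i j else 0)"
    and "lrational b" "\<forall>i j. lev i j > M \<longrightarrow> b i j = 0"
  shows "lrational (\<lambda>i j. if lev i j > M - int k then b i j else 0)"
proof (induction k)
  case 0
  have "(\<lambda>i j. if lev i j > M - int 0 then b i j else 0) = (\<lambda>_ _. 0)"
    using assms(3) by (auto simp: fun_eq_iff)
  then show ?case using lrational_zero by simp
next
  case (Suc k)
  define rest where "rest = (\<lambda>i j. 1 * b i j + (-1) * (if lev i j > M - int k then b i j else 0))"
  have "lrational rest"
    unfolding rest_def by (rule lrational_lincomb[OF assms(2) Suc.IH])
  moreover have "\<forall>i j. lev i j > M - int k \<longrightarrow> rest i j = 0"
    unfolding rest_def by auto
  ultimately have "lrational (\<lambda>i j. if lev i j = M - int k then rest i j else 0)"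
    by (rule top_slice)
  then have "lrational (\<lambda>i j. 1 * (if lev i j > M - int k then b i j else 0)
      + 1 * (if lev i j = M - int k then rest i j else 0))"
    by (rule lrational_lincomb[OF Suc.IH])
  also have "(\<lambda>i j. 1 * (if lev i j > M - int k then b i j else 0)
      + 1 * (if lev i j = M - int k then rest i j else 0))
     = (\<lambda>i j. if lev i j > M - int (Suc k) then b i j else 0)"
    by (auto simp: rest_def fun_eq_iff)
  finally show ?case .
qed

lemma lrational_top_rows:
  assumes "lrational b" "\<forall>i j. j > M \<longrightarrow> b i j = 0"
  shows "lrational (\<lambda>i j. if j > M - int k then b i j else 0)"
  by (rule lrational_strip[where lev = "\<lambda>i j. j"]) (use lrational_top_row assms in blast)+

lemma lrational_top_cols:
  assumes "lrational b" "\<forall>i j. i > N \<longrightarrow> b i j = 0"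
  shows "lrational (\<lambda>i j. if i > N - int k then b i j else 0)"
  by (rule lrational_strip[where lev = "\<lambda>i j. i"]) (use lrational_top_col assms in blast)+

lemma lrational_corner:
  assumes "lrational b" "\<forall>i j. (i > N \<or> j > M) \<longrightarrow> b i j = 0"
  shows "lrational (\<lambda>i j. if i > N - int k \<or> j > M - int l then b i j else 0)"
proof -
  define rows where "rows = (\<lambda>i j. if j > M - int l then b i j else 0)"
  have "lrational rows"
    unfolding rows_def using assms by (intro lrational_top_rows) auto
  define rest where "rest = (\<lambda>i j. 1 * b i j + (-1) * rows i j)"
  have "lrational rest"
    unfolding rest_def by (rule lrational_lincomb[OF assms(1) \<open>lrational rows\<close>])
  moreover have "\<forall>i j. i > N \<longrightarrow> rest i j = 0"
    using assms(2) by (simp add: rest_def rows_def)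
  ultimately have "lrational (\<lambda>i j. if i > N - int k then rest i j else 0)"
    by (rule lrational_top_cols)
  then have "lrational (\<lambda>i j. 1 * rows i j + 1 * (if i > N - int k then rest i j else 0))"
    by (rule lrational_lincomb[OF \<open>lrational rows\<close>])
  also have "(\<lambda>i j. 1 * rows i j + 1 * (if i > N - int k then rest i j else 0))
      = (\<lambda>i j. if i > N - int k \<or> j > M - int l then b i j else 0)"
    by (auto simp: fun_eq_iff rows_def rest_def)
  finally show ?thesis .
qed

subsection \<open>The operator of the recurrence\<close>

lemma lmult_z_lseries_of:
  assumes "i < 0" "j < 0" "degree c \<le> n"
  shows "lmult_z c (lseries_of a) i j
       = (\<Sum>\<alpha>\<le>n. coeff c \<alpha> * a (nat (- i - 1) + \<alpha>) (nat (- j - 1)))"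
proof -
  have "nat (- (i - int \<alpha>) - 1) = nat (- i - 1) + \<alpha>" for \<alpha>
    using assms(1) by linarith
  then have "lmult_z c (lseries_of a) i j
      = (\<Sum>\<alpha>\<le>degree c. coeff c \<alpha> * a (nat (- i - 1) + \<alpha>) (nat (- j - 1)))"
    unfolding lmult_z_def lseries_of_def using assms(1,2) by simp
  also have "\<dots> = (\<Sum>\<alpha>\<le>n. coeff c \<alpha> * a (nat (- i - 1) + \<alpha>) (nat (- j - 1)))"
    using assms(3) by (intro sum.mono_neutral_cong_left) (auto simp: coeff_eq_0)
  finally show ?thesis .
qed

lemma lmult_lseries_of_eq_0:
  assumes "\<And>\<beta>. degree (coeff q \<beta>) \<le> n" "i \<ge> int n \<or> j \<ge> int (degree q)"
  shows "lmult q (lseries_of a) i j = 0"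
  unfolding lmult_def lmult_z_def lseries_of_def
proof (intro sum.neutral ballI)
  fix \<beta> \<alpha>
  assume "\<beta> \<in> {..degree q}" "\<alpha> \<in> {..degree (coeff q \<beta>)}"
  then have "int \<alpha> \<le> int n" "int \<beta> \<le> int (degree q)"
    using assms(1)[of \<beta>] by auto
  then show "coeff (coeff q \<beta>) \<alpha> * (if i - int \<alpha> < 0 \<and> j - int \<beta> < 0
      then a (nat (- (i - int \<alpha>) - 1)) (nat (- (j - int \<beta>) - 1)) else 0) = 0"
    using assms(2) by auto
qed

lemma lseries_of_restrict:
  "lseries_of (\<lambda>x y. if x < m \<or> y = 0 then a x y else 0)
     = (\<lambda>i j. if i > - 1 - int m \<or> j > - 1 - int 1 then lseries_of a i j else 0)"
  by (auto simp: fun_eq_iff lseries_of_def nat_less_iff)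

lemma lmult_recurrence:
  fixes P Q :: "complex poly" and r s :: "nat \<Rightarrow> nat \<Rightarrow> complex"
  assumes deg: "degree P \<le> m" "degree Q \<le> m"
    and rec: "\<forall>x y. (\<Sum>\<alpha>\<le>m. coeff P \<alpha> * r (x + \<alpha>) (y + 1))
                    - (\<Sum>\<alpha>\<le>m. coeff Q \<alpha> * r (x + \<alpha>) y) = 0"
    and agree: "\<forall>x y. (x < m \<or> y = 0) \<longrightarrow> r x y = s x y"
  shows "lmult [:- Q, P:] (lseries_of r) i j
       = (if i < 0 \<and> j < 0 then 0 else lmult [:- Q, P:] (lseries_of s) i j)"
proof -
  have L: "lmult [:- Q, P:] b i j = lmult_z P b i (j - 1) - lmult_z Q b i j" for b
    by (simp add: lmult_pCons lmult_z_uminus)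
  show ?thesis
  proof (cases "i < 0 \<and> j < 0")
    case True
    have "nat (- (j - 1) - 1) = nat (- j - 1) + 1"
      using True by linarith
    then have "lmult [:- Q, P:] (lseries_of r) i j
        = (\<Sum>\<alpha>\<le>m. coeff P \<alpha> * r (nat (- i - 1) + \<alpha>) (nat (- j - 1) + 1))
        - (\<Sum>\<alpha>\<le>m. coeff Q \<alpha> * r (nat (- i - 1) + \<alpha>) (nat (- j - 1)))"
      using True deg by (simp add: L lmult_z_lseries_of)
    with rec True show ?thesis by simp
  next
    case False
    \<comment> \<open>outside the negative quadrant only the values of \<open>r\<close> on \<open>X\<close> are reached\<close>
    have "lseries_of r u v = lseries_of s u v" if "u \<ge> - int m \<or> v \<ge> - 1" for u v
      using that agree by (auto simp: lseries_of_def nat_less_iff)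
    then have same: "lmult_z c (lseries_of r) i v = lmult_z c (lseries_of s) i v"
      if "degree c \<le> m" "i \<ge> 0 \<or> v \<ge> - 1" for c v
      unfolding lmult_z_def using that by (intro sum.cong refl) auto
    have "lmult_z P (lseries_of r) i (j - 1) = lmult_z P (lseries_of s) i (j - 1)"
      "lmult_z Q (lseries_of r) i j = lmult_z Q (lseries_of s) i j"
      using False deg by (auto intro!: same)
    with False show ?thesis
      by (simp add: L del: de_Morgan_conj)
  qed
qed

theorem mainTheorem3:
  fixes P Q :: "complex poly" and m :: nat
    and X :: "(nat \<times> nat) set"
    and \<phi> r :: "nat \<Rightarrow> nat \<Rightarrow> complex"
  assumes "m \<ge> 1" and "degree P = m" and "coeff P m \<noteq> 0" and "degree Q < m"
    and "X = {(x, y). x < m \<or> y = 0}"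
    and "\<forall>x y. (\<Sum>\<alpha>\<le>m. coeff P \<alpha> * r (x + \<alpha>) (y + 1))
                 - (\<Sum>\<alpha>\<le>m. coeff Q \<alpha> * r (x + \<alpha>) y) = 0"
    and "\<forall>x y. (x, y) \<in> X \<longrightarrow> r x y = \<phi> x y"
  shows "rational_series r \<longleftrightarrow>
         rational_series (\<lambda>x y. if (x, y) \<in> X then \<phi> x y else 0)"
proof -
  define s where "s = (\<lambda>x y. if (x, y) \<in> X then \<phi> x y else 0)"
  define L where "L = [:- Q, P:]"
  define D where "D = lseries_of r"
  define \<Phi> where "\<Phi> = lseries_of s"
  have "degree P \<le> m" "degree Q \<le> m"
    using assms(2,4) by auto
  have "L \<noteq> 0" "degree L \<le> 1" "\<And>\<beta>. degree (coeff L \<beta>) \<le> m"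
    using assms(2-4) by (auto simp: L_def coeff_pCons split: nat.split)
  have r_eq_s: "\<forall>x y. (x < m \<or> y = 0) \<longrightarrow> r x y = s x y"
    using assms(5,7) by (simp add: s_def)
  then have "s = (\<lambda>x y. if x < m \<or> y = 0 then r x y else 0)"
    using assms(5) by (auto simp: fun_eq_iff s_def)
  then have \<Phi>_cut: "\<Phi> = (\<lambda>i j. if i > - 1 - int m \<or> j > - 1 - int 1 then D i j else 0)"
    unfolding \<Phi>_def D_def by (simp add: lseries_of_restrict)
  have LD_cut: "lmult L D = (\<lambda>i j. if i > int m - 1 - int m \<or> j > 0 - int 1
      then lmult L \<Phi> i j else 0)"
    using lmult_recurrence[OF \<open>degree P \<le> m\<close> \<open>degree Q \<le> m\<close> assms(6) r_eq_s]
    by (auto simp: fun_eq_iff L_def D_def \<Phi>_def)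
  have "lrational D \<longleftrightarrow> lrational \<Phi>"
  proof
    assume "lrational D"
    then show "lrational \<Phi>"
      unfolding \<Phi>_cut by (rule lrational_corner) (simp add: D_def lseries_of_def)
  next
    assume "lrational \<Phi>"
    then have "lrational (lmult L D)"
      unfolding LD_cut using \<open>degree L \<le> 1\<close> \<open>\<And>\<beta>. degree (coeff L \<beta>) \<le> m\<close>
      by (intro lrational_corner lrational_lmult) (auto simp: \<Phi>_def intro!: lmult_lseries_of_eq_0)
    then show "lrational D"
      by (rule lrational_lmult_cancel[OF \<open>L \<noteq> 0\<close>])
  qed
  then show ?thesis
    by (simp add: D_def \<Phi>_def s_def rational_series_iff_lrational)
qed

end
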